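(* Let $X,Y$ be real normed linear spaces and $Z=X\oplus_pY$ with $1<p<\infty$. Let $(x,y)\in Z\setminus\{\theta\}$, where $x$ is $\varepsilon_x$-smooth in $X$ and $y$ is $\varepsilon_y$-smooth in $Y$ for some $\varepsilon_x,\varepsilon_y\in[0,2)$. Then $(x,y)$ is $\varepsilon$-smooth in $Z$ with $\varepsilon=\max\{\varepsilon_x,\varepsilon_y\}$.
   Context: $X\oplus_pY$ is $X\times Y$ with norm $(\|x\|^p+\|y\|^p)^{1/p}$. For a normed space $W$ and $w\neq\theta$, $J(w)=\{\phi\in S_{W^*}:\phi(w)=\|w\|\}$, and $w$ is $\delta$-smooth if $\sup_{\phi,\psi\in J(w)}\|\phi-\psi\|\le\delta$ (this is only defined for $w\neq\theta$, so the hypothesis includes $x\neq\theta$ and $y\neq\theta$). *)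

theory Defs
  imports "HOL-Analysis.Analysis"
begin

text \<open>A normed space is given by a real vector space type together with a norm
  function N.  For the spaces X, Y we use N = norm; for Z = X (+)_p Y we use the
  p-norm on the product type.\<close>

definition pnorm :: "real \<Rightarrow> ('a::real_normed_vector \<times> 'b::real_normed_vector) \<Rightarrow> real" where
  "pnorm p z = (norm (fst z) powr p + norm (snd z) powr p) powr (1 / p)"

definition is_functional :: "('a::real_vector \<Rightarrow> real) \<Rightarrow> ('a \<Rightarrow> real) \<Rightarrow> bool" where
  "is_functional N f \<longleftrightarrow> linear f \<and> (\<exists>K. \<forall>v. \<bar>f v\<bar> \<le> K * N v)"

definition dnorm :: "('a::real_vector \<Rightarrow> real) \<Rightarrow> ('a \<Rightarrow> real) \<Rightarrow> real" where
  "dnorm N f = (SUP v\<in>{v. N v \<le> 1}. \<bar>f v\<bar>)"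

definition Jset :: "('a::real_vector \<Rightarrow> real) \<Rightarrow> 'a \<Rightarrow> ('a \<Rightarrow> real) set" where
  "Jset N w = {f. is_functional N f \<and> dnorm N f = 1 \<and> f w = N w}"

text \<open>w is delta-smooth: w \<noteq> 0 and sup over phi, psi in J(w) of ||phi - psi|| \<le> delta
  (a supremum is \<le> delta iff every element is).\<close>
definition delta_smooth :: "('a::real_vector \<Rightarrow> real) \<Rightarrow> 'a \<Rightarrow> real \<Rightarrow> bool" where
  "delta_smooth N w \<delta> \<longleftrightarrow> w \<noteq> 0 \<and>
     (\<forall>\<phi>\<in>Jset N w. \<forall>\<psi>\<in>Jset N w. dnorm N (\<lambda>v. \<phi> v - \<psi> v) \<le> \<delta>)"

end

theory Submission
  imports Defs
begin

(* Let \<phi> \<in> J(x, y) and N = \<parallel>(x, y)\<parallel>\<^sub>p. Since \<phi> is dominated by the p-norm and touches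
   it at (x, y), the value \<phi>(u, 0) is bounded by the one-sided derivative of the p-norm at (x, y)
   in direction (u, 0), which is at most a = (\<parallel>x\<parallel>/N)^(p-1) for \<parallel>u\<parallel> \<le> 1; likewise
   \<phi>(0, v) \<le> b = (\<parallel>y\<parallel>/N)^(p-1) for \<parallel>v\<parallel> \<le> 1. As a\<parallel>x\<parallel> + b\<parallel>y\<parallel> = N = \<phi>(x, y), both bounds
   are attained, so \<phi>(u, v) = a f(u) + b g(v) with f \<in> J(x) and g \<in> J(y). Hence any two elements
   of J(x, y) satisfy |(\<phi> - \<psi>)(u, v)| \<le> \<epsilon> (a\<parallel>u\<parallel> + b\<parallel>v\<parallel>), and a\<parallel>u\<parallel> + b\<parallel>v\<parallel> \<le> \<parallel>(u, v)\<parallel>\<^sub>p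
   by Hoelder's inequality, because a^q + b^q = 1 for the conjugate exponent q. *)

lemma DERIV_ge_of_difference_quotient_ge:
  fixes h :: "real \<Rightarrow> real"
  assumes "(h has_real_derivative D) (at a)"
    and "\<And>l. 0 < l \<Longrightarrow> c \<le> (h (a + l) - h a) / l"
  shows "c \<le> D"
proof -
  have "((\<lambda>b. (h b - h a) / (b - a)) \<longlongrightarrow> D) (at_right a)"
    using has_field_derivative_at_within[OF assms(1), of "{a<..}"]
    by (simp add: has_field_derivative_iff)
  moreover have "\<forall>\<^sub>F b in at_right a. c \<le> (h b - h a) / (b - a)"
    using assms(2)[of "_ - a"] by (simp add: eventually_at_filter)
  ultimately show ?thesis
    by (intro tendsto_lowerbound) auto
qed

lemma has_real_derivative_pnorm_shift:
  fixes p s t :: real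
  assumes "0 < p" "0 < s" "0 \<le> t"
  defines "N \<equiv> (s powr p + t powr p) powr (1 / p)"
  shows "((\<lambda>l. ((s + l) powr p + t powr p) powr (1 / p)) has_real_derivative (s / N) powr (p - 1)) (at 0)"
proof -
  define S where "S = s powr p + t powr p"
  have "S > 0" using assms by (simp add: S_def add_pos_nonneg)
  have "((\<lambda>l. ((s + l) powr p + t powr p) powr (1 / p)) has_real_derivative
      (1 / p) * S powr (1 / p - 1) * (p * s powr (p - 1))) (at 0)"
    using assms \<open>S > 0\<close> unfolding S_def
    by (auto intro!: derivative_eq_intros)
  also have "(1 / p) * S powr (1 / p - 1) * (p * s powr (p - 1)) = (s / N) powr (p - 1)"
  proof -
    have "N powr (p - 1) = S powr (1 - 1 / p)"
      using assms(1) by (simp add: N_def S_def powr_powr field_simps)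
    moreover have "S powr (1 / p - 1) = inverse (S powr (1 - 1 / p))"
      by (simp add: powr_minus[symmetric])
    ultimately show ?thesis
      using assms by (simp add: powr_divide field_simps)
  qed
  finally show ?thesis .
qed

lemma powr_dual_weights_holder:
  fixes p s t U V :: real
  assumes p: "1 < p" and "0 \<le> s" "0 \<le> t" "0 < s powr p + t powr p" and "0 \<le> U" "0 \<le> V"
  defines "N \<equiv> (s powr p + t powr p) powr (1 / p)"
  shows "(s / N) powr (p - 1) * U + (t / N) powr (p - 1) * V \<le> (U powr p + V powr p) powr (1 / p)"
proof -
  define M where "M = (U powr p + V powr p) powr (1 / p)"
  define q where "q = p / (p - 1)"
  have q: "1 < q" "1 / q + 1 / p = 1"
    using p by (auto simp: q_def field_simps)
  have "N > 0" using assms by (simp add: N_def)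
  have Np: "N powr p = s powr p + t powr p"
    using assms by (simp add: N_def powr_powr)
  show ?thesis
  proof (cases "M = 0")
    case True
    then have "U = 0" "V = 0"
      using assms by (auto simp: M_def add_nonneg_eq_0_iff)
    then show ?thesis by simp
  next
    case False
    then have "M > 0" by (simp add: M_def)
    have Mp: "M powr p = U powr p + V powr p"
      using assms by (simp add: M_def powr_powr)
    have young: "(a / N) powr (p - 1) * (A / M) \<le> a powr p / N powr p / q + A powr p / M powr p / p"
      if "0 \<le> a" "0 \<le> A" for a A
    proof -
      have "(a / N) powr (p - 1) * (A / M) \<le> ((a / N) powr (p - 1)) powr q / q + (A / M) powr p / p"
        using Youngs_inequality[OF q(1) p q(2), of "(a / N) powr (p - 1)" "A / M"] that \<open>M > 0\<close>
        by simp
      also have "((a / N) powr (p - 1)) powr q = a powr p / N powr p"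
        using p that \<open>N > 0\<close> by (simp add: powr_powr q_def powr_divide)
      also have "(A / M) powr p = A powr p / M powr p"
        using that \<open>M > 0\<close> by (simp add: powr_divide)
      finally show ?thesis .
    qed
    have "(s / N) powr (p - 1) * (U / M) + (t / N) powr (p - 1) * (V / M)
        \<le> (s powr p + t powr p) / N powr p / q + (U powr p + V powr p) / M powr p / p"
      using young[of s U] young[of t V] assms by (simp add: add_divide_distrib)
    also have "\<dots> = 1"
      using q(2) \<open>N > 0\<close> \<open>M > 0\<close> by (simp flip: Np Mp)
    finally have "((s / N) powr (p - 1) * U + (t / N) powr (p - 1) * V) / M \<le> 1"
      by (simp add: add_divide_distrib)
    then show ?thesis
      using \<open>M > 0\<close> by (simp add: M_def pos_divide_le_eq)
  qed
qed

lemma powr_dual_weights_sum: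
  fixes p s t :: real
  assumes "0 < p" "0 \<le> s" "0 \<le> t" "0 < s powr p + t powr p"
  defines "N \<equiv> (s powr p + t powr p) powr (1 / p)"
  shows "(s / N) powr (p - 1) * s + (t / N) powr (p - 1) * t = N"
proof -
  have "N > 0" using assms by (simp add: N_def)
  have pow: "(r / N) powr (p - 1) * r = r powr p / N powr (p - 1)" if "0 \<le> r" for r
    using that powr_add[of r "p - 1" 1] by (simp add: powr_divide)
  have "(s / N) powr (p - 1) * s + (t / N) powr (p - 1) * t = (s powr p + t powr p) / N powr (p - 1)"
    using assms(2,3) by (simp add: pow add_divide_distrib)
  also have "s powr p + t powr p = N powr p"
    using assms(1-4) by (simp add: N_def powr_powr)
  also have "N powr p / N powr (p - 1) = N"
    using \<open>N > 0\<close> by (simp flip: powr_diff)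
  finally show ?thesis .
qed

lemma delta_smooth_mono:
  "delta_smooth N w \<delta> \<Longrightarrow> \<delta> \<le> \<delta>' \<Longrightarrow> delta_smooth N w \<delta>'"
  unfolding delta_smooth_def by force

text \<open>pnorm is not the norm of the product type (which is Euclidean), so dual norms are treated
  for an arbitrary absolutely homogeneous, definite N.\<close>

locale norm_function =
  fixes N :: "'a::real_vector \<Rightarrow> real"
  assumes scaleR: "N (c *\<^sub>R v) = \<bar>c\<bar> * N v"
    and nonneg: "0 \<le> N v"
    and eq_0: "N v = 0 \<Longrightarrow> v = 0"
begin

lemma zero [simp]: "N 0 = 0"
  using scaleR[of 0 0] by simp

lemma linear_abs_le_scaled:
  assumes h: "linear h" and bound: "\<And>v. N v \<le> 1 \<Longrightarrow> h v \<le> c"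
  shows "\<bar>h v\<bar> \<le> c * N v"
proof (cases "v = 0")
  case True
  then show ?thesis using linear_0[OF h] by simp
next
  case False
  then have "N v > 0" using nonneg[of v] eq_0[of v] by linarith
  define w where "w = (1 / N v) *\<^sub>R v"
  have "N w = 1" "N (- w) = 1"
    using \<open>N v > 0\<close> scaleR[of "-1" w] by (simp_all add: w_def scaleR)
  then have "\<bar>h w\<bar> \<le> c"
    using bound[of w] bound[of "- w"] linear_neg[OF h] by fastforce
  moreover have "h w = h v / N v"
    using linear_scale[OF h] by (simp add: w_def)
  ultimately show ?thesis
    using \<open>N v > 0\<close> by (simp add: abs_div pos_divide_le_eq)
qed

lemma bdd_above_functional:
  assumes "is_functional N h"
  shows "bdd_above ((\<lambda>v. \<bar>h v\<bar>) ` {v. N v \<le> 1})"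
proof -
  obtain K where K: "\<And>v. \<bar>h v\<bar> \<le> K * N v"
    using assms unfolding is_functional_def by blast
  have "\<bar>h v\<bar> \<le> \<bar>K\<bar>" if "N v \<le> 1" for v
    using K[of v] nonneg[of v] that
    by (smt (verit, best) abs_ge_self mult_left_le mult_right_mono)
  then show ?thesis by (intro bdd_aboveI2[where M = "\<bar>K\<bar>"]) auto
qed

lemma dnorm_upper:
  assumes "is_functional N h" "N v \<le> 1"
  shows "\<bar>h v\<bar> \<le> dnorm N h"
  unfolding dnorm_def using assms bdd_above_functional by (auto intro: cSUP_upper)

lemma dnorm_least:
  assumes "\<And>v. N v \<le> 1 \<Longrightarrow> \<bar>h v\<bar> \<le> c"
  shows "dnorm N h \<le> c"
  unfolding dnorm_def
proof (rule cSUP_least)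
  have "N 0 \<le> 1" by simp
  then show "{v. N v \<le> 1} \<noteq> {}" by blast
qed (use assms in auto)

lemma abs_le_dnorm_mult:
  assumes "is_functional N h"
  shows "\<bar>h v\<bar> \<le> dnorm N h * N v"
proof (rule linear_abs_le_scaled)
  show "linear h" using assms by (simp add: is_functional_def)
  show "h v \<le> dnorm N h" if "N v \<le> 1" for v
    using dnorm_upper[OF assms that] by simp
qed

lemma JsetI:
  assumes g: "linear g" and bound: "\<And>u. N u \<le> 1 \<Longrightarrow> g u \<le> 1"
    and "g w = N w" and "w \<noteq> 0"
  shows "g \<in> Jset N w"
proof -
  have le: "\<bar>g u\<bar> \<le> N u" for u
    using linear_abs_le_scaled[OF g bound] by simp
  then have functional: "is_functional N g"
    using g unfolding is_functional_def by (metis mult_1)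
  have "dnorm N g \<le> 1"
    using le by (intro dnorm_least) (meson order_trans)
  moreover have "1 \<le> dnorm N g"
  proof -
    have "N w > 0" using \<open>w \<noteq> 0\<close> nonneg[of w] eq_0[of w] by linarith
    define w' where "w' = (1 / N w) *\<^sub>R w"
    have "N w' = 1" "g w' = 1"
      using \<open>N w > 0\<close> \<open>g w = N w\<close> linear_scale[OF g] by (simp_all add: w'_def scaleR)
    then show ?thesis using dnorm_upper[OF functional, of w'] by simp
  qed
  ultimately show ?thesis
    unfolding Jset_def using functional \<open>g w = N w\<close> by simp
qed

lemma delta_smoothI:
  assumes "w \<noteq> 0" "0 \<le> \<delta>"
    and "\<And>f g v. f \<in> Jset N w \<Longrightarrow> g \<in> Jset N w \<Longrightarrow> \<bar>f v - g v\<bar> \<le> \<delta> * N v"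
  shows "delta_smooth N w \<delta>"
  unfolding delta_smooth_def
proof (intro conjI ballI dnorm_least)
  fix f g v
  assume "f \<in> Jset N w" "g \<in> Jset N w" "N v \<le> 1"
  then show "\<bar>f v - g v\<bar> \<le> \<delta>"
    using assms(2,3) mult_left_le[of "N v" \<delta>] by (meson order_trans)
qed (use assms(1) in simp)

lemma Jset_diff_le:
  assumes "f \<in> Jset N w" "g \<in> Jset N w" "delta_smooth N w \<delta>"
  shows "\<bar>f u - g u\<bar> \<le> \<delta> * N u"
proof -
  have f: "is_functional N f" "dnorm N f = 1" and g: "is_functional N g" "dnorm N g = 1"
    using assms by (auto simp: Jset_def)
  have "linear (\<lambda>u. f u - g u)"
    using f g by (intro linear_compose_sub) (auto simp: is_functional_def)
  moreover have "\<bar>f u - g u\<bar> \<le> 2 * N u" for u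
    using abs_le_dnorm_mult[OF f(1), of u] abs_le_dnorm_mult[OF g(1), of u] f g by simp
  ultimately have "is_functional N (\<lambda>u. f u - g u)"
    unfolding is_functional_def by blast
  moreover have "dnorm N (\<lambda>u. f u - g u) \<le> \<delta>"
    using assms by (auto simp: delta_smooth_def)
  ultimately show ?thesis
    using abs_le_dnorm_mult[of "\<lambda>u. f u - g u" u] nonneg[of u]
    by (smt (verit) mult_right_mono)
qed

end

interpretation norm: norm_function "norm :: 'a::real_normed_vector \<Rightarrow> real"
  by unfold_locales auto

lemma norm_function_pnorm:
  assumes "0 < p"
  shows "norm_function (pnorm p :: 'a::real_normed_vector \<times> 'b::real_normed_vector \<Rightarrow> real)"
proof
  fix c :: real and v :: "'a \<times> 'b"
  have "pnorm p (c *\<^sub>R v) = (\<bar>c\<bar> powr p * (norm (fst v) powr p + norm (snd v) powr p)) powr (1 / p)"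
    by (simp add: pnorm_def powr_mult distrib_left)
  also have "\<dots> = \<bar>c\<bar> * pnorm p v"
    using assms by (simp add: pnorm_def powr_mult powr_powr)
  finally show "pnorm p (c *\<^sub>R v) = \<bar>c\<bar> * pnorm p v" .
next
  fix v :: "'a \<times> 'b"
  show "0 \<le> pnorm p v" by (simp add: pnorm_def)
  assume "pnorm p v = 0"
  then show "v = 0"
    by (auto simp: pnorm_def add_nonneg_eq_0_iff prod_eq_iff)
qed

lemma pnorm_supporting_functional_fst_le:
  fixes \<phi> :: "'a::real_normed_vector \<times> 'b::real_normed_vector \<Rightarrow> real"
  assumes p: "1 < p" and "x \<noteq> 0" and lin: "linear \<phi>"
    and le: "\<And>z. \<phi> z \<le> pnorm p z" and eq: "\<phi> (x, y) = pnorm p (x, y)"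
    and u: "norm u \<le> 1"
  shows "\<phi> (u, 0) \<le> (norm x / pnorm p (x, y)) powr (p - 1)"
proof -
  define s t where "s = norm x" and "t = norm y"
  define h where "h l = ((s + l) powr p + t powr p) powr (1 / p)" for l
  have h0: "h 0 = pnorm p (x, y)"
    by (simp add: h_def pnorm_def s_def t_def)
  have "(h has_real_derivative (norm x / pnorm p (x, y)) powr (p - 1)) (at 0)"
    using has_real_derivative_pnorm_shift[of p s t] p \<open>x \<noteq> 0\<close>
    unfolding h_def s_def t_def pnorm_def by simp
  moreover have "\<phi> (u, 0) \<le> (h (0 + l) - h 0) / l" if "0 < l" for l
  proof -
    have "h 0 + l * \<phi> (u, 0) = \<phi> ((x, y) + l *\<^sub>R (u, 0))"
      unfolding linear_add[OF lin] linear_scale[OF lin] using eq h0 by simp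
    also have "\<dots> \<le> pnorm p (x + l *\<^sub>R u, y)"
      using le by simp
    also have "\<dots> \<le> h l"
    proof -
      have "norm (x + l *\<^sub>R u) \<le> s + l"
        using norm_triangle_ineq[of x "l *\<^sub>R u"] u \<open>0 < l\<close>
        by (simp add: s_def) (smt (verit) mult_left_le)
      then have "norm (x + l *\<^sub>R u) powr p \<le> (s + l) powr p"
        using p by (intro powr_mono2) auto
      then show ?thesis
        using p unfolding h_def pnorm_def t_def by (intro powr_mono2) auto
    qed
    finally show ?thesis
      using \<open>0 < l\<close> by (simp add: pos_le_divide_eq mult.commute)
  qed
  ultimately show ?thesis
    by (rule DERIV_ge_of_difference_quotient_ge)
qed

lemma pnorm_supporting_functional_snd_le:
  fixes \<phi> :: "'a::real_normed_vector \<times> 'b::real_normed_vector \<Rightarrow> real"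
  assumes p: "1 < p" and "y \<noteq> 0" and lin: "linear \<phi>"
    and le: "\<And>z. \<phi> z \<le> pnorm p z" and eq: "\<phi> (x, y) = pnorm p (x, y)"
    and v: "norm v \<le> 1"
  shows "\<phi> (0, v) \<le> (norm y / pnorm p (x, y)) powr (p - 1)"
proof -
  have pnorm_swap: "pnorm p (b, a) = pnorm p (a, b)" for a b
    by (simp add: pnorm_def add.commute)
  have "\<phi> (c *\<^sub>R a, c *\<^sub>R b) = c * \<phi> (a, b)" for c a b
    using linear_scale[OF lin, of c "(a, b)"] by simp
  then have "linear (\<lambda>z. \<phi> (snd z, fst z))"
    by (intro linearI) (simp_all flip: linear_add[OF lin])
  moreover have "\<phi> (snd z, fst z) \<le> pnorm p z" for z :: "'b \<times> 'a"
    using le[of "(snd z, fst z)"] pnorm_swap[of "fst z" "snd z"] by simp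
  moreover have "\<phi> (x, y) = pnorm p (y, x)"
    using eq pnorm_swap[of y x] by simp
  ultimately have "\<phi> (0, v) \<le> (norm y / pnorm p (y, x)) powr (p - 1)"
    using pnorm_supporting_functional_fst_le[OF p \<open>y \<noteq> 0\<close>, of "\<lambda>z. \<phi> (snd z, fst z)" x v] v
    by simp
  then show ?thesis
    using pnorm_swap[of y x] by simp
qed

lemma Jset_pnorm_decompose:
  fixes x :: "'a::real_normed_vector" and y :: "'b::real_normed_vector"
  assumes p: "1 < p" and "x \<noteq> 0" "y \<noteq> 0" and \<phi>: "\<phi> \<in> Jset (pnorm p) (x, y)"
  defines "a \<equiv> (norm x / pnorm p (x, y)) powr (p - 1)"
    and "b \<equiv> (norm y / pnorm p (x, y)) powr (p - 1)"
  obtains f g where "f \<in> Jset norm x" "g \<in> Jset norm y" "\<And>u v. \<phi> (u, v) = a * f u + b * g v"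
proof -
  interpret Z: norm_function "pnorm p :: 'a \<times> 'b \<Rightarrow> real"
    using p by (intro norm_function_pnorm) simp
  have lin: "linear \<phi>" and eq: "\<phi> (x, y) = pnorm p (x, y)" and le: "\<phi> z \<le> pnorm p z" for z
    using \<phi> Z.abs_le_dnorm_mult[of \<phi> z] by (auto simp: Jset_def is_functional_def)
  have "0 < pnorm p (x, y)"
    using \<open>x \<noteq> 0\<close> Z.nonneg[of "(x, y)"] Z.eq_0[of "(x, y)"] by (auto simp: zero_prod_def less_le)
  then have "0 < a" "0 < b"
    using \<open>x \<noteq> 0\<close> \<open>y \<noteq> 0\<close> by (simp_all add: a_def b_def)
  define f where "f u = \<phi> (u, 0) / a" for u
  define g where "g v = \<phi> (0, v) / b" for v
  have \<phi>_add: "\<phi> (u + u', v + v') = \<phi> (u, v) + \<phi> (u', v')" for u u' v v'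
    using linear_add[OF lin, of "(u, v)" "(u', v')"] by simp
  have \<phi>_scale: "\<phi> (c *\<^sub>R u, c *\<^sub>R v) = c * \<phi> (u, v)" for c u v
    using linear_scale[OF lin, of c "(u, v)"] by simp
  have "linear f" "linear g"
    by (rule linearI; simp add: f_def g_def flip: add_divide_distrib \<phi>_add \<phi>_scale)+
  have f_le: "f u \<le> 1" if "norm u \<le> 1" for u
    using pnorm_supporting_functional_fst_le[OF p \<open>x \<noteq> 0\<close> lin le eq that] \<open>0 < a\<close>
    by (simp add: f_def a_def)
  have g_le: "g v \<le> 1" if "norm v \<le> 1" for v
    using pnorm_supporting_functional_snd_le[OF p \<open>y \<noteq> 0\<close> lin le eq that] \<open>0 < b\<close>
    by (simp add: g_def b_def)
  have decomp: "\<phi> (u, v) = a * f u + b * g v" for u v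
    using \<phi>_add[of u 0 0 v] \<open>0 < a\<close> \<open>0 < b\<close> by (simp add: f_def g_def)
  moreover have "f x = norm x \<and> g y = norm y"
  proof -
    have "f x \<le> norm x" "g y \<le> norm y"
      using norm.linear_abs_le_scaled[OF \<open>linear f\<close> f_le, of x]
        norm.linear_abs_le_scaled[OF \<open>linear g\<close> g_le, of y] by simp_all
    moreover have "a * norm x + b * norm y = pnorm p (x, y)"
      using powr_dual_weights_sum[of p "norm x" "norm y"] p \<open>x \<noteq> 0\<close>
      by (simp add: a_def b_def pnorm_def mult.commute add_pos_nonneg)
    then have "a * f x + b * g y = a * norm x + b * norm y"
      using decomp[of x y] eq by simp
    ultimately show ?thesis
      using \<open>0 < a\<close> \<open>0 < b\<close> by (smt (verit) mult_strict_left_mono)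
  qed
  ultimately show ?thesis
    using that norm.JsetI[OF \<open>linear f\<close> f_le] norm.JsetI[OF \<open>linear g\<close> g_le] \<open>x \<noteq> 0\<close> \<open>y \<noteq> 0\<close>
    by blast
qed

lemma Jset_pnorm_diff_le:
  fixes x :: "'a::real_normed_vector" and y :: "'b::real_normed_vector"
  assumes p: "1 < p" and "0 \<le> \<epsilon>"
    and x: "delta_smooth norm x \<epsilon>" and y: "delta_smooth norm y \<epsilon>"
    and \<phi>: "\<phi> \<in> Jset (pnorm p) (x, y)" and \<psi>: "\<psi> \<in> Jset (pnorm p) (x, y)"
  shows "\<bar>\<phi> (u, v) - \<psi> (u, v)\<bar> \<le> \<epsilon> * pnorm p (u, v)"
proof -
  have "x \<noteq> 0" "y \<noteq> 0"
    using x y by (auto simp: delta_smooth_def)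
  define a b where "a = (norm x / pnorm p (x, y)) powr (p - 1)"
    and "b = (norm y / pnorm p (x, y)) powr (p - 1)"
  have "0 \<le> a" "0 \<le> b"
    by (simp_all add: a_def b_def)
  obtain f g where f: "f \<in> Jset norm x" and g: "g \<in> Jset norm y"
    and \<phi>_eq: "\<And>u v. \<phi> (u, v) = a * f u + b * g v"
    using Jset_pnorm_decompose[OF p \<open>x \<noteq> 0\<close> \<open>y \<noteq> 0\<close> \<phi>] unfolding a_def b_def by blast
  obtain f' g' where f': "f' \<in> Jset norm x" and g': "g' \<in> Jset norm y"
    and \<psi>_eq: "\<And>u v. \<psi> (u, v) = a * f' u + b * g' v"
    using Jset_pnorm_decompose[OF p \<open>x \<noteq> 0\<close> \<open>y \<noteq> 0\<close> \<psi>] unfolding a_def b_def by blast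
  have "\<phi> (u, v) - \<psi> (u, v) = a * (f u - f' u) + b * (g v - g' v)"
    by (simp add: \<phi>_eq \<psi>_eq right_diff_distrib)
  then have "\<bar>\<phi> (u, v) - \<psi> (u, v)\<bar> \<le> a * \<bar>f u - f' u\<bar> + b * \<bar>g v - g' v\<bar>"
    using abs_triangle_ineq[of "a * (f u - f' u)" "b * (g v - g' v)"] \<open>0 \<le> a\<close> \<open>0 \<le> b\<close>
    by (simp add: abs_mult)
  also have "\<dots> \<le> \<epsilon> * (a * norm u + b * norm v)"
    using mult_left_mono[OF norm.Jset_diff_le[OF f f' x, of u] \<open>0 \<le> a\<close>]
      mult_left_mono[OF norm.Jset_diff_le[OF g g' y, of v] \<open>0 \<le> b\<close>]
    by (simp add: algebra_simps)
  also have "\<dots> \<le> \<epsilon> * pnorm p (u, v)"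
    using powr_dual_weights_holder[OF p, of "norm x" "norm y" "norm u" "norm v"]
      \<open>x \<noteq> 0\<close> \<open>0 \<le> \<epsilon>\<close>
    by (intro mult_left_mono) (simp_all add: a_def b_def pnorm_def add_pos_nonneg)
  finally show ?thesis .
qed

theorem theorem6p2:
  fixes x :: "'a::real_normed_vector" and y :: "'b::real_normed_vector"
    and p \<epsilon>x \<epsilon>y :: real
  assumes "1 < p"
    and "0 \<le> \<epsilon>x" and "\<epsilon>x < 2" and "0 \<le> \<epsilon>y" and "\<epsilon>y < 2"
    and "delta_smooth norm x \<epsilon>x"
    and "delta_smooth norm y \<epsilon>y"
  shows "delta_smooth (pnorm p) (x, y) (max \<epsilon>x \<epsilon>y)"
proof -
  interpret Z: norm_function "pnorm p :: 'a \<times> 'b \<Rightarrow> real"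
    using assms(1) by (intro norm_function_pnorm) simp
  define \<epsilon> where "\<epsilon> = max \<epsilon>x \<epsilon>y"
  have "0 \<le> \<epsilon>"
    using assms(2) by (simp add: \<epsilon>_def le_max_iff_disj)
  have x: "delta_smooth norm x \<epsilon>" and y: "delta_smooth norm y \<epsilon>"
    using assms(6,7) by (auto simp: \<epsilon>_def intro: delta_smooth_mono)
  have "(x, y) \<noteq> 0"
    using x by (simp add: delta_smooth_def zero_prod_def)
  then show ?thesis
    unfolding \<epsilon>_def[symmetric]
    by (rule Z.delta_smoothI[OF _ \<open>0 \<le> \<epsilon>\<close>])
      (use Jset_pnorm_diff_le[OF assms(1) \<open>0 \<le> \<epsilon>\<close> x y] in fastforce)
qed

end
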